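(* The InDC method (with $M$ uniform quadrature nodes excluding the left-most point) constructed with stiffly accurate IRK methods with invertible coefficient matrices in the prediction and correction steps can be considered again as an implicit Runge–Kutta method, which is stiffly accurate and whose Butcher coefficient matrix $A$ is invertible.
   Context: InDC-IRK method for an ODE $y'=F(y)$ over one step $[t_n,t_n+H]$: nodes $\tau_m=t_n+mh$, $h=H/M$; $\alpha_j$ ($j=1,\dots,M$) the Lagrange basis polynomials of degree $M-1$ for $\tau_1,\dots,\tau_M$; $S^m(\bar w)=\frac1h\sum_jw_j\int_{\tau_m}^{\tau_{m+1}}\alpha_j$, $S^{c_{mi}}(\bar w)=\frac1h\sum_jw_j\int_{\tau_m}^{\tau_m+c_ih}\alpha_j$, $P^{c_{mi}}(\bar w)=\sum_jw_j\alpha_j(\tau_m+c_ih)$. Prediction: IRK method (tableau $A^{(0)},b^{(0)},c^{(0)}$) on each substep with step $h$. Correction $k=1,\dots,K$ (tableau $(a_{ij}),(b_i),(c_i)$): $y^{(k)}_0=y_n$, $Y_{mi}=y^{(k)}_m+hS^{c_{mi}}(\bar F^{(k-1)})+h\sum_ja_{ij}\Delta K_{mj}$, $y^{(k)}_{m+1}=y^{(k)}_m+hS^m(\bar F^{(k-1)})+h\sum_ib_i\Delta K_{mi}$, $\Delta K_{mi}=F(Y_{mi})-P^{c_{mi}}(\bar F^{(k-1)})$, $\bar F^{(k-1)}=(F(y^{(k-1)}_j))_{j=1}^M$; output $y^{(K)}_M$. A RK method is stiffly accurate if $b^T=e_s^TA$ (last row of $A$ equals $b^T$). *)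

theory Defs
  imports "HOL-Analysis.Analysis" "Jordan_Normal_Form.Matrix"
begin

text \<open>Runge--Kutta tableaux are given as a square real matrix A (Jordan_Normal_Form mat),
  a weight vector b and a node vector c; stages are indexed from 0.\<close>

definition stiffly_accurate :: "real mat \<Rightarrow> real vec \<Rightarrow> bool" where
  "stiffly_accurate A b \<longleftrightarrow>
     (let s = dim_vec b in 0 < s \<and> A \<in> carrier_mat s s \<and> row A (s - 1) = b)"

text \<open>Stage equations and output of an RK method (A,b) applied with step H to y' = F(y)
  (autonomous, so the nodes c do not enter).\<close>

definition rk_stage_eqs :: "real mat \<Rightarrow> real \<Rightarrow> ('a::real_vector \<Rightarrow> 'a) \<Rightarrow> 'a \<Rightarrow> (nat \<Rightarrow> 'a) \<Rightarrow> bool" where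
  "rk_stage_eqs A H F yn Z \<longleftrightarrow>
     (\<forall>i < dim_row A. Z i = yn + H *\<^sub>R (\<Sum>j < dim_col A. (A $$ (i, j)) *\<^sub>R F (Z j)))"

definition rk_output :: "real vec \<Rightarrow> real \<Rightarrow> ('a::real_vector \<Rightarrow> 'a) \<Rightarrow> 'a \<Rightarrow> (nat \<Rightarrow> 'a) \<Rightarrow> 'a" where
  "rk_output b H F yn Z = yn + H *\<^sub>R (\<Sum>j < dim_vec b. (b $ j) *\<^sub>R F (Z j))"

definition node :: "real \<Rightarrow> real \<Rightarrow> nat \<Rightarrow> real" where
  "node tn h m = tn + real m * h"

definition lagr :: "nat \<Rightarrow> real \<Rightarrow> real \<Rightarrow> nat \<Rightarrow> real \<Rightarrow> real" where
  "lagr M tn h j t = (\<Prod>l \<in> {1..M} - {j}. (t - node tn h l) / (node tn h j - node tn h l))"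

definition oint :: "real \<Rightarrow> real \<Rightarrow> (real \<Rightarrow> real) \<Rightarrow> real" where
  "oint a b f = (if a \<le> b then integral {a..b} f else - integral {b..a} f)"

definition quadS :: "nat \<Rightarrow> real \<Rightarrow> real \<Rightarrow> nat \<Rightarrow> (nat \<Rightarrow> 'a::real_vector) \<Rightarrow> 'a" where
  "quadS M tn h m w = (1 / h) *\<^sub>R
     (\<Sum>j \<in> {1..M}. oint (node tn h m) (node tn h (Suc m)) (lagr M tn h j) *\<^sub>R w j)"

definition quadSc :: "nat \<Rightarrow> real \<Rightarrow> real \<Rightarrow> nat \<Rightarrow> real \<Rightarrow> (nat \<Rightarrow> 'a::real_vector) \<Rightarrow> 'a" where
  "quadSc M tn h m ci w = (1 / h) *\<^sub>R
     (\<Sum>j \<in> {1..M}. oint (node tn h m) (node tn h m + ci * h) (lagr M tn h j) *\<^sub>R w j)"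

definition quadP :: "nat \<Rightarrow> real \<Rightarrow> real \<Rightarrow> nat \<Rightarrow> real \<Rightarrow> (nat \<Rightarrow> 'a::real_vector) \<Rightarrow> 'a" where
  "quadP M tn h m ci w = (\<Sum>j \<in> {1..M}. lagr M tn h j (node tn h m + ci * h) *\<^sub>R w j)"

text \<open>InDC step values. Y k m i is the stage value Y_{m,i+1} of sweep k
  (k = 0: prediction, k \<ge> 1: k-th correction); indc_y k m is y^{(k)}_m.
  Here h is the substep H/M.\<close>

fun indc_y :: "nat \<Rightarrow> real \<Rightarrow> real \<Rightarrow> ('a::real_vector \<Rightarrow> 'a) \<Rightarrow> 'a \<Rightarrow> real vec \<Rightarrow> real vec \<Rightarrow> real vec
     \<Rightarrow> (nat \<Rightarrow> nat \<Rightarrow> nat \<Rightarrow> 'a) \<Rightarrow> nat \<Rightarrow> nat \<Rightarrow> 'a" where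
  "indc_y M tn h F yn b0 b c Y 0 0 = yn"
| "indc_y M tn h F yn b0 b c Y 0 (Suc m) =
     indc_y M tn h F yn b0 b c Y 0 m + h *\<^sub>R (\<Sum>i < dim_vec b0. (b0 $ i) *\<^sub>R F (Y 0 m i))"
| "indc_y M tn h F yn b0 b c Y (Suc k) 0 = yn"
| "indc_y M tn h F yn b0 b c Y (Suc k) (Suc m) =
     indc_y M tn h F yn b0 b c Y (Suc k) m
     + h *\<^sub>R quadS M tn h m (\<lambda>j. F (indc_y M tn h F yn b0 b c Y k j))
     + h *\<^sub>R (\<Sum>i < dim_vec b. (b $ i) *\<^sub>R
          (F (Y (Suc k) m i) - quadP M tn h m (c $ i) (\<lambda>j. F (indc_y M tn h F yn b0 b c Y k j))))"

definition indc_stage_eqs :: "nat \<Rightarrow> nat \<Rightarrow> real mat \<Rightarrow> real vec \<Rightarrow> real mat \<Rightarrow> real vec \<Rightarrow> real vec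
     \<Rightarrow> real \<Rightarrow> real \<Rightarrow> ('a::real_vector \<Rightarrow> 'a) \<Rightarrow> 'a \<Rightarrow> (nat \<Rightarrow> nat \<Rightarrow> nat \<Rightarrow> 'a) \<Rightarrow> bool" where
  "indc_stage_eqs M K A0 b0 a b c tn H F yn Y \<longleftrightarrow>
     (let h = H / real M;
          yv = indc_y M tn h F yn b0 b c Y in
       (\<forall>m < M. \<forall>i < dim_row A0.
          Y 0 m i = yv 0 m + h *\<^sub>R (\<Sum>j < dim_col A0. (A0 $$ (i, j)) *\<^sub>R F (Y 0 m j))) \<and>
       (\<forall>k \<in> {1..K}. \<forall>m < M. \<forall>i < dim_row a.
          Y k m i = yv k m
            + h *\<^sub>R quadSc M tn h m (c $ i) (\<lambda>j. F (yv (k - 1) j))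
            + h *\<^sub>R (\<Sum>j < dim_col a. (a $$ (i, j)) *\<^sub>R
                 (F (Y k m j) - quadP M tn h m (c $ j) (\<lambda>j'. F (yv (k - 1) j'))))))"

definition indc_output :: "nat \<Rightarrow> nat \<Rightarrow> real vec \<Rightarrow> real vec \<Rightarrow> real vec
     \<Rightarrow> real \<Rightarrow> real \<Rightarrow> ('a::real_vector \<Rightarrow> 'a) \<Rightarrow> 'a \<Rightarrow> (nat \<Rightarrow> nat \<Rightarrow> nat \<Rightarrow> 'a) \<Rightarrow> 'a" where
  "indc_output M K b0 b c tn H F yn Y = indc_y M tn (H / real M) F yn b0 b c Y K M"

definition indc_index :: "nat \<Rightarrow> nat \<Rightarrow> nat \<Rightarrow> nat \<Rightarrow> (nat \<times> nat \<times> nat) set" where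
  "indc_index M K s0 s = {(k, m, i). k \<le> K \<and> m < M \<and> i < (if k = 0 then s0 else s)}"

end

theory Submission
  imports Defs "Jordan_Normal_Form.Determinant"
begin

text \<open>Every InDC sweep is linear in the stage derivatives: after rescaling to the reference nodes
  \<open>1, \<dots>, M\<close> the quadrature weights no longer depend on \<open>t_n\<close> and \<open>h\<close>, and by stiff
  accuracy of both tableaux the value \<open>y^(k)_(m+1)\<close> is the last stage of substep \<open>m\<close> of sweep
  \<open>k\<close>, so the derivatives \<open>F(y^(k)_j)\<close> entering the next sweep are stage derivatives.
  Hence every stage value is \<open>y_n\<close> plus \<open>H\<close> times a fixed linear combination of all stage
  derivatives, which is a Runge--Kutta method once the stages are enumerated. Ordered by sweep and
  substep its coefficient matrix is block lower triangular with diagonal blocks \<open>A0/M\<close> and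
  \<open>a/M\<close>, hence invertible, and listing the final stage last makes it stiffly accurate, since the
  output \<open>y^(K)_M\<close> is that final stage.\<close>

section \<open>Quadrature weights in reference coordinates\<close>

definition lagr_ref :: "nat \<Rightarrow> nat \<Rightarrow> real \<Rightarrow> real" where
  "lagr_ref M j x = (\<Prod>l\<in>{1..M}-{j}. (x - real l) / (real j - real l))"

definition int_weight :: "nat \<Rightarrow> nat \<Rightarrow> real \<Rightarrow> nat \<Rightarrow> real" where
  "int_weight M m ci j = oint (real m) (real m + ci) (lagr_ref M j)"

definition interp_weight :: "nat \<Rightarrow> nat \<Rightarrow> real \<Rightarrow> nat \<Rightarrow> real" where
  "interp_weight M m ci j = lagr_ref M j (real m + ci)"

lemma lagr_affine:
  assumes "h \<noteq> 0"
  shows "lagr M tn h j (tn + x * h) = lagr_ref M j x"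
  unfolding lagr_def lagr_ref_def
proof (rule prod.cong[OF refl])
  fix l assume "l \<in> {1..M} - {j}"
  then have "real j - real l \<noteq> 0" by auto
  then show "(tn + x * h - node tn h l) / (node tn h j - node tn h l) = (x - real l) / (real j - real l)"
    using assms unfolding node_def by (simp add: field_simps)
qed

lemma integral_affine_real:
  fixes f :: "real \<Rightarrow> real"
  assumes h: "h > 0" and le: "x0 \<le> x1"
  shows "integral {tn + x0 * h .. tn + x1 * h} f = h * integral {x0..x1} (\<lambda>x. f (tn + x * h))"
proof -
  have img: "(\<lambda>x. x / h) ` {x0 * h..x1 * h} = {x0..x1}"
    using image_affinity_atLeastAtMost_div[of h 0 "x0 * h" "x1 * h"] h le
    by (auto simp: mult_right_mono)
  have "integral {tn + x0 * h .. tn + x1 * h} f = integral {x0 * h..x1 * h} (\<lambda>x. f (x + tn))"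
    using integral_shift_real_ivl[of "tn + x0 * h" tn "tn + x1 * h" f] by simp
  also have "\<dots> = h * integral ((\<lambda>x. x / h) ` {x0 * h..x1 * h}) (\<lambda>x. f (h * x + tn))"
    using integral_stretch_real[of h "x0 * h" "x1 * h" "\<lambda>x. f (x + tn)"] h by simp
  finally show ?thesis
    unfolding img by (simp add: add.commute mult.commute)
qed

lemma oint_affine:
  fixes f :: "real \<Rightarrow> real"
  assumes "h > 0"
  shows "oint (tn + x0 * h) (tn + x1 * h) f = h * oint x0 x1 (\<lambda>x. f (tn + x * h))"
  using integral_affine_real[OF assms, of x0 x1 tn f] integral_affine_real[OF assms, of x1 x0 tn f] assms
  unfolding oint_def by (auto simp: mult_le_cancel_right)

lemma quadP_eq_interp_weight:
  assumes "h \<noteq> 0"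
  shows "quadP M tn h m ci w = (\<Sum>j<M. interp_weight M m ci (Suc j) *\<^sub>R w (Suc j))"
proof -
  have "node tn h m + ci * h = tn + (real m + ci) * h"
    unfolding node_def by (simp add: algebra_simps)
  then show ?thesis
    unfolding quadP_def interp_weight_def
    using lagr_affine[OF assms] by (simp add: sum.atLeast1_atMost_eq)
qed

lemma quadSc_eq_int_weight:
  assumes h: "h > 0"
  shows "quadSc M tn h m ci w = (\<Sum>j<M. int_weight M m ci (Suc j) *\<^sub>R w (Suc j))"
proof -
  have "oint (node tn h m) (node tn h m + ci * h) (lagr M tn h j) = h * int_weight M m ci j" for j
  proof -
    have "oint (node tn h m) (node tn h m + ci * h) (lagr M tn h j)
        = oint (tn + real m * h) (tn + (real m + ci) * h) (lagr M tn h j)"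
      unfolding node_def by (simp add: distrib_right add.assoc)
    also have "\<dots> = h * oint (real m) (real m + ci) (\<lambda>x. lagr M tn h j (tn + x * h))"
      by (rule oint_affine[OF h])
    finally show ?thesis
      unfolding int_weight_def using lagr_affine[of h M tn j] h by simp
  qed
  then show ?thesis
    unfolding quadSc_def using h by (simp add: scaleR_sum_right sum.atLeast1_atMost_eq)
qed

lemma quadS_eq_quadSc: "quadS M tn h m w = quadSc M tn h m 1 w"
  unfolding quadS_def quadSc_def node_def by (simp add: algebra_simps)

section \<open>Linear combinations and invertible matrices\<close>

definition lin_comb :: "'i set \<Rightarrow> ('i \<Rightarrow> real) \<Rightarrow> ('i \<Rightarrow> 'a::real_vector) \<Rightarrow> 'a" where
  "lin_comb I \<phi> g = (\<Sum>q\<in>I. \<phi> q *\<^sub>R g q)"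

definition delta :: "'i \<Rightarrow> 'i \<Rightarrow> real" where
  "delta q p = (if p = q then 1 else 0)"

lemma lin_comb_add: "lin_comb I (\<lambda>p. \<phi> p + \<psi> p) g = lin_comb I \<phi> g + lin_comb I \<psi> g"
  unfolding lin_comb_def by (simp add: scaleR_add_left sum.distrib)

lemma lin_comb_diff: "lin_comb I (\<lambda>p. \<phi> p - \<psi> p) g = lin_comb I \<phi> g - lin_comb I \<psi> g"
  unfolding lin_comb_def by (simp add: scaleR_diff_left sum_subtractf)

lemma lin_comb_scale: "lin_comb I (\<lambda>p. r * \<phi> p) g = r *\<^sub>R lin_comb I \<phi> g"
  unfolding lin_comb_def by (simp add: scaleR_sum_right)

lemma lin_comb_sum: "lin_comb I (\<lambda>p. \<Sum>j\<in>J. \<phi> j p) g = (\<Sum>j\<in>J. lin_comb I (\<phi> j) g)"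
  unfolding lin_comb_def by (simp add: scaleR_sum_left sum.swap[of _ I])

lemma lin_comb_zero: "lin_comb I (\<lambda>p. 0) g = 0"
  unfolding lin_comb_def by simp

lemma lin_comb_delta:
  assumes "finite I"
  shows "lin_comb I (delta q) g = (if q \<in> I then g q else 0)"
proof -
  have "lin_comb I (delta q) g = (\<Sum>p\<in>I. if p = q then g q else 0)"
    unfolding lin_comb_def delta_def by (rule sum.cong) auto
  then show ?thesis using assms by (simp add: sum.delta')
qed

lemmas lin_comb_linear = lin_comb_add lin_comb_diff lin_comb_scale lin_comb_sum lin_comb_zero

lemma invertible_mat_kernel:
  fixes A :: "'a::field mat"
  assumes "invertible_mat A" and A: "A \<in> carrier_mat n n"
    and v: "v \<in> carrier_vec n" and Av: "A *\<^sub>v v = 0\<^sub>v n"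
  shows "v = 0\<^sub>v n"
proof -
  obtain B where BA: "B * A = 1\<^sub>m n" and rB: "dim_row B = n" and cB: "dim_col B = n"
    using assms(1) A unfolding invertible_mat_def inverts_mat_def
    by (metis carrier_matD index_mult_mat(2,3) index_one_mat(2,3))
  then have B: "B \<in> carrier_mat n n" by auto
  have "v = (B * A) *\<^sub>v v" using BA v by simp
  also have "\<dots> = B *\<^sub>v (A *\<^sub>v v)" using B A v by simp
  also have "\<dots> = 0\<^sub>v n" unfolding Av using rB cB by (intro eq_vecI) (simp_all add: scalar_prod_def)
  finally show ?thesis .
qed

lemma invertible_mat_of_kernel:
  fixes A :: "'a::field mat"
  assumes A: "A \<in> carrier_mat n n"
    and ker: "\<And>v. v \<in> carrier_vec n \<Longrightarrow> A *\<^sub>v v = 0\<^sub>v n \<Longrightarrow> v = 0\<^sub>v n"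
  shows "invertible_mat A"
proof -
  have "det A \<noteq> 0" using det_0_iff_vec_prod_zero_field[OF A] ker by blast
  then have "A \<in> Units (ring_mat TYPE('a) n ())" by (rule det_non_zero_imp_unit[OF A])
  then obtain B where "B \<in> carrier_mat n n" "B * A = 1\<^sub>m n" "A * B = 1\<^sub>m n"
    unfolding Units_def ring_mat_def by auto
  then show ?thesis unfolding invertible_mat_def inverts_mat_def using A by auto
qed

lemma invertible_mat_kernel_sum:
  fixes A :: "'a::field mat"
  assumes "invertible_mat A" and A: "A \<in> carrier_mat n n"
    and zero: "\<forall>i<n. (\<Sum>j<n. A $$ (i, j) * v j) = 0" and j: "j < n"
  shows "v j = 0"
proof -
  have "A *\<^sub>v vec n v = 0\<^sub>v n"
    using A zero by (intro eq_vecI) (simp_all add: scalar_prod_def atLeast0LessThan)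
  then have "vec n v = 0\<^sub>v n" by (rule invertible_mat_kernel[OF assms(1) A vec_carrier])
  then show ?thesis using j by (metis index_vec index_zero_vec(1))
qed

section \<open>Runge--Kutta tableaux from coefficient systems\<close>

lemma ex_bij_betw_lessThan_last:
  assumes "finite I" and p: "p \<in> I"
  obtains \<sigma> where "bij_betw \<sigma> I {..<card I}" and "\<sigma> p = card I - 1"
proof -
  define n where "n = card (I - {p})"
  obtain f where f: "bij_betw f (I - {p}) {0..<n}"
    using ex_bij_betw_finite_nat[of "I - {p}"] assms(1) unfolding n_def by auto
  define \<sigma> where "\<sigma> q = (if q = p then n else f q)" for q
  have "bij_betw \<sigma> (I - {p}) {0..<n}"
    using f bij_betw_cong[of "I - {p}" \<sigma> f "{0..<n}"] by (simp add: \<sigma>_def)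
  then have "bij_betw \<sigma> ((I - {p}) \<union> {p}) ({0..<n} \<union> {n})"
    using notIn_Un_bij_betw[of p "I - {p}" \<sigma> "{0..<n}"] by (simp add: \<sigma>_def)
  moreover have "(I - {p}) \<union> {p} = I" using p by auto
  moreover have "card I = Suc n" unfolding n_def by (rule card.remove[OF assms])
  moreover have "{0..<n} \<union> {n} = {..<Suc n}" by auto
  moreover have "\<sigma> p = n" by (simp add: \<sigma>_def)
  ultimately show ?thesis using that by simp
qed

lemma tableau_of_injective_coeffs:
  fixes coef :: "'i \<Rightarrow> 'i \<Rightarrow> real"
  assumes fin: "finite I" and p: "p \<in> I"
    and inj: "\<And>x. \<forall>q\<in>I. (\<Sum>r\<in>I. coef q r * x r) = 0 \<Longrightarrow> \<forall>q\<in>I. x q = 0"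
  obtains \<sigma> A where "bij_betw \<sigma> I {..<card I}" and "\<sigma> p = card I - 1"
    and "A \<in> carrier_mat (card I) (card I)" and "invertible_mat A"
    and "\<And>q r. q \<in> I \<Longrightarrow> r \<in> I \<Longrightarrow> A $$ (\<sigma> q, \<sigma> r) = coef q r"
proof -
  let ?N = "card I"
  obtain \<sigma> where \<sigma>: "bij_betw \<sigma> I {..<?N}" and last: "\<sigma> p = ?N - 1"
    using ex_bij_betw_lessThan_last[OF fin p] .
  define \<tau> where "\<tau> = inv_into I \<sigma>"
  have \<tau>: "bij_betw \<tau> {..<?N} I" unfolding \<tau>_def by (rule bij_betw_inv_into[OF \<sigma>])
  have \<tau>\<sigma>: "\<tau> (\<sigma> q) = q" if "q \<in> I" for q
    unfolding \<tau>_def using \<sigma> that by (simp add: bij_betw_imp_inj_on inv_into_f_f)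
  have \<sigma>_lt: "\<sigma> q < ?N" if "q \<in> I" for q using bij_betw_apply[OF \<sigma> that] by simp
  define A where "A = mat ?N ?N (\<lambda>(r, c). coef (\<tau> r) (\<tau> c))"
  have A: "A \<in> carrier_mat ?N ?N" unfolding A_def by simp
  have entries: "A $$ (\<sigma> q, \<sigma> r) = coef q r" if "q \<in> I" "r \<in> I" for q r
    using that \<sigma>_lt \<tau>\<sigma> unfolding A_def by simp
  have "invertible_mat A"
  proof (rule invertible_mat_of_kernel[OF A])
    fix v :: "real vec" assume v: "v \<in> carrier_vec ?N" and Av: "A *\<^sub>v v = 0\<^sub>v ?N"
    have "(\<Sum>r\<in>I. coef q r * v $ \<sigma> r) = 0" if q: "q \<in> I" for q
    proof -
      have "(\<Sum>r\<in>I. coef q r * v $ \<sigma> r) = (\<Sum>c<?N. coef q (\<tau> c) * v $ c)"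
        using sum.reindex_bij_betw[OF \<tau>, of "\<lambda>r. coef q r * v $ \<sigma> r"] \<tau> \<tau>\<sigma>
        unfolding \<tau>_def using \<sigma> by (simp add: bij_betw_inv_into_right)
      also have "\<dots> = (A *\<^sub>v v) $ \<sigma> q"
        using \<sigma>_lt[OF q] \<tau>\<sigma>[OF q] v unfolding A_def by (simp add: scalar_prod_def atLeast0LessThan)
      finally show ?thesis using Av \<sigma>_lt[OF q] by simp
    qed
    then have zero: "v $ \<sigma> q = 0" if "q \<in> I" for q using inj[of "\<lambda>r. v $ \<sigma> r"] that by blast
    show "v = 0\<^sub>v ?N"
    proof (rule eq_vecI)
      fix c assume "c < dim_vec (0\<^sub>v ?N :: real vec)"
      then have "c \<in> {..<?N}" by simp
      then have "\<tau> c \<in> I" and "\<sigma> (\<tau> c) = c"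
        using bij_betw_apply[OF \<tau>] \<sigma> unfolding \<tau>_def by (auto simp: bij_betw_inv_into_right)
      then show "v $ c = 0\<^sub>v ?N $ c" using zero[of "\<tau> c"] \<open>c \<in> {..<?N}\<close> by simp
    qed (use v in simp)
  qed
  with \<sigma> last A entries show ?thesis using that by blast
qed

lemma ball_lessThan_inv_into_iff:
  assumes "bij_betw \<sigma> I {..<n}"
  shows "(\<forall>l<n. P (inv_into I \<sigma> l)) \<longleftrightarrow> (\<forall>q\<in>I. P q)"
proof -
  have "inv_into I \<sigma> ` {..<n} = I" by (rule bij_betw_imp_surj_on[OF bij_betw_inv_into[OF assms]])
  then have "(\<forall>q\<in>I. P q) \<longleftrightarrow> (\<forall>q\<in>inv_into I \<sigma> ` {..<n}. P q)" by simp
  then show ?thesis by (simp add: lessThan_def)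
qed

lemma rk_stage_eqs_reindex:
  fixes Y :: "'i \<Rightarrow> 'a::real_vector"
  assumes \<sigma>: "bij_betw \<sigma> I {..<n}" and A: "A \<in> carrier_mat n n"
    and entries: "\<And>q r. q \<in> I \<Longrightarrow> r \<in> I \<Longrightarrow> A $$ (\<sigma> q, \<sigma> r) = coef q r"
  shows "rk_stage_eqs A H F yn (\<lambda>l. Y (inv_into I \<sigma> l)) \<longleftrightarrow>
           (\<forall>q\<in>I. Y q = yn + H *\<^sub>R lin_comb I (coef q) (\<lambda>r. F (Y r)))"
proof -
  have \<sigma>\<tau>: "\<sigma> (inv_into I \<sigma> l) = l" and \<tau>_in: "inv_into I \<sigma> l \<in> I" if "l < n" for l
    using that \<sigma> by (auto simp: bij_betw_inv_into_right bij_betw_def inv_into_into)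
  have \<tau>\<sigma>: "inv_into I \<sigma> (\<sigma> q) = q" if "q \<in> I" for q
    using \<sigma> that by (simp add: bij_betw_imp_inj_on inv_into_f_f)
  have row: "(\<Sum>j<n. A $$ (\<sigma> q, j) *\<^sub>R F (Y (inv_into I \<sigma> j))) = lin_comb I (coef q) (\<lambda>r. F (Y r))"
    if q: "q \<in> I" for q
  proof -
    have "(\<Sum>j<n. A $$ (\<sigma> q, j) *\<^sub>R F (Y (inv_into I \<sigma> j)))
        = (\<Sum>j<n. A $$ (\<sigma> q, \<sigma> (inv_into I \<sigma> j)) *\<^sub>R F (Y (inv_into I \<sigma> j)))"
      by (rule sum.cong) (simp_all add: \<sigma>\<tau>)
    also have "\<dots> = (\<Sum>r\<in>I. A $$ (\<sigma> q, \<sigma> r) *\<^sub>R F (Y r))"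
      by (rule sum.reindex_bij_betw[OF bij_betw_inv_into[OF \<sigma>]])
    finally show ?thesis
      unfolding lin_comb_def using q entries by simp
  qed
  have "rk_stage_eqs A H F yn (\<lambda>l. Y (inv_into I \<sigma> l)) \<longleftrightarrow>
      (\<forall>l<n. Y (inv_into I \<sigma> l) = yn + H *\<^sub>R lin_comb I (coef (inv_into I \<sigma> l)) (\<lambda>r. F (Y r)))"
    unfolding rk_stage_eqs_def using A row[OF \<tau>_in] by (simp add: \<sigma>\<tau>)
  also have "\<dots> \<longleftrightarrow> (\<forall>q\<in>I. Y q = yn + H *\<^sub>R lin_comb I (coef q) (\<lambda>r. F (Y r)))"
    by (rule ball_lessThan_inv_into_iff[OF \<sigma>])
  finally show ?thesis .
qed

lemma rk_output_last_row:
  assumes A: "A \<in> carrier_mat n n" and n: "0 < n" and stages: "rk_stage_eqs A H F yn Z"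
  shows "rk_output (row A (n - 1)) H F yn Z = Z (n - 1)"
  using stages A n unfolding rk_stage_eqs_def rk_output_def by simp

lemma stiffly_accurate_last_row:
  assumes "A \<in> carrier_mat n n" and "0 < n"
  shows "stiffly_accurate A (row A (n - 1))"
  using assms unfolding stiffly_accurate_def Let_def by simp

lemma stiffly_accurate_last_row_entry:
  assumes stiff: "stiffly_accurate A b" and j: "j < dim_vec b"
  shows "A $$ (dim_vec b - 1, j) = b $ j"
proof -
  have "A \<in> carrier_mat (dim_vec b) (dim_vec b)" and "0 < dim_vec b"
    using stiff unfolding stiffly_accurate_def Let_def by auto
  then have "A $$ (dim_vec b - 1, j) = row A (dim_vec b - 1) $ j" using j by simp
  also have "\<dots> = b $ j" using stiff unfolding stiffly_accurate_def Let_def by simp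
  finally show ?thesis .
qed

lemma ball_atLeast1_atMost_iff: "(\<forall>k\<in>{1..n}. P k) \<longleftrightarrow> (\<forall>k<n. P (Suc k))"
proof
  assume P: "\<forall>k<n. P (Suc k)"
  show "\<forall>k\<in>{1..n}. P k"
  proof
    fix k assume "k \<in> {1..n}"
    then have "k = Suc (k - 1)" and "k - 1 < n" by auto
    then show "P k" using P by metis
  qed
next
  assume P: "\<forall>k\<in>{1..n}. P k"
  show "\<forall>k<n. P (Suc k)"
  proof (intro allI impI)
    fix k assume "k < n"
    then have "Suc k \<in> {1..n}" by simp
    then show "P (Suc k)" using P by blast
  qed
qed

lemma ball_indc_index:
  "(\<forall>(k, m, i)\<in>indc_index M K s0 s. P k m i) \<longleftrightarrow>
     (\<forall>m<M. \<forall>i<s0. P 0 m i) \<and> (\<forall>k<K. \<forall>m<M. \<forall>i<s. P (Suc k) m i)"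
proof
  assume "\<forall>(k, m, i)\<in>indc_index M K s0 s. P k m i"
  moreover have "(0, m, i) \<in> indc_index M K s0 s" if "m < M" "i < s0" for m i
    using that unfolding indc_index_def by simp
  moreover have "(Suc k, m, i) \<in> indc_index M K s0 s" if "k < K" "m < M" "i < s" for k m i
    using that unfolding indc_index_def by simp
  ultimately show "(\<forall>m<M. \<forall>i<s0. P 0 m i) \<and> (\<forall>k<K. \<forall>m<M. \<forall>i<s. P (Suc k) m i)"
    by fastforce
next
  assume P: "(\<forall>m<M. \<forall>i<s0. P 0 m i) \<and> (\<forall>k<K. \<forall>m<M. \<forall>i<s. P (Suc k) m i)"
  show "\<forall>(k, m, i)\<in>indc_index M K s0 s. P k m i"
  proof (clarify)
    fix k m i assume "(k, m, i) \<in> indc_index M K s0 s"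
    with P show "P k m i" unfolding indc_index_def by (cases k) auto
  qed
qed

section \<open>The InDC stages as linear combinations of stage derivatives\<close>

locale indc_tableaux =
  fixes M K :: nat and A0 a :: "real mat" and b0 b c :: "real vec"
  assumes M_pos: "M \<ge> 1"
    and stiff0: "stiffly_accurate A0 b0" and inv0: "invertible_mat A0"
    and stiff: "stiffly_accurate a b" and inv: "invertible_mat a"
    and dim_c: "dim_vec c = dim_vec b"
    and c_row_sum: "\<forall>i < dim_vec c. c $ i = (\<Sum>j < dim_vec b. a $$ (i, j))"
    and b_sum: "(\<Sum>i < dim_vec b. b $ i) = 1"
begin

abbreviation "s0 \<equiv> dim_vec b0"
abbreviation "s \<equiv> dim_vec b"
abbreviation "I \<equiv> indc_index M K s0 s"

definition last_stage :: "nat \<Rightarrow> nat" where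
  "last_stage k = (if k = 0 then s0 - 1 else s - 1)"

lemma s0_pos: "0 < s0" and s_pos: "0 < s"
  using stiff0 stiff unfolding stiffly_accurate_def Let_def by auto

lemma A0_carrier: "A0 \<in> carrier_mat s0 s0" and a_carrier: "a \<in> carrier_mat s s"
  using stiff0 stiff unfolding stiffly_accurate_def Let_def by auto

lemma c_last: "c $ (s - 1) = 1"
  using c_row_sum dim_c s_pos stiffly_accurate_last_row_entry[OF stiff] b_sum by simp

lemma finite_I: "finite I"
proof (rule finite_subset)
  show "I \<subseteq> {..K} \<times> {..<M} \<times> {..<max s0 s}"
    unfolding indc_index_def by (auto simp: less_max_iff_disj split: if_splits)
qed simp

lemma last_stage_less: "last_stage k < (if k = 0 then s0 else s)"
  unfolding last_stage_def using s0_pos s_pos by auto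

lemma last_stage_in: "k \<le> K \<Longrightarrow> m < M \<Longrightarrow> (k, m, last_stage k) \<in> I"
  unfolding indc_index_def using last_stage_less by auto

lemma final_stage_in: "(K, M - 1, last_stage K) \<in> I"
  using last_stage_in[of K "M - 1"] M_pos by simp

lemma card_I_pos: "0 < card I"
  using final_stage_in finite_I card_gt_0_iff by blast

text \<open>Coefficients are taken relative to \<open>H = M h\<close>. In sweep \<open>k + 1\<close> the derivative
  \<open>F(y^(k)_(j+1))\<close> is represented by the stage \<open>(k, j, last_stage k)\<close>.\<close>

fun y_coeff :: "nat \<Rightarrow> nat \<Rightarrow> nat \<times> nat \<times> nat \<Rightarrow> real" where
  "y_coeff 0 0 = (\<lambda>p. 0)"
| "y_coeff 0 (Suc m) = (\<lambda>p. y_coeff 0 m p + (1 / real M) * (\<Sum>i<s0. b0 $ i * delta (0, m, i) p))"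
| "y_coeff (Suc k) 0 = (\<lambda>p. 0)"
| "y_coeff (Suc k) (Suc m) = (\<lambda>p. y_coeff (Suc k) m p
     + (1 / real M) * (\<Sum>j<M. int_weight M m 1 (Suc j) * delta (k, j, last_stage k) p)
     + (1 / real M) * (\<Sum>i<s. b $ i * (delta (Suc k, m, i) p
          - (\<Sum>j<M. interp_weight M m (c $ i) (Suc j) * delta (k, j, last_stage k) p))))"

fun stage_coeff :: "nat \<times> nat \<times> nat \<Rightarrow> nat \<times> nat \<times> nat \<Rightarrow> real" where
  "stage_coeff (0, m, i) =
     (\<lambda>p. y_coeff 0 m p + (1 / real M) * (\<Sum>j<s0. A0 $$ (i, j) * delta (0, m, j) p))"
| "stage_coeff (Suc k, m, i) = (\<lambda>p. y_coeff (Suc k) m p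
     + (1 / real M) * (\<Sum>j<M. int_weight M m (c $ i) (Suc j) * delta (k, j, last_stage k) p)
     + (1 / real M) * (\<Sum>j<s. a $$ (i, j) * (delta (Suc k, m, j) p
          - (\<Sum>j'<M. interp_weight M m (c $ j) (Suc j') * delta (k, j', last_stage k) p))))"

lemma stage_coeff_last_stage: "stage_coeff (k, m, last_stage k) = y_coeff k (Suc m)"
proof (cases k)
  case 0
  then show ?thesis
    using stiffly_accurate_last_row_entry[OF stiff0] by (simp add: last_stage_def fun_eq_iff)
next
  case (Suc k')
  then show ?thesis
    using stiffly_accurate_last_row_entry[OF stiff] c_last by (simp add: last_stage_def fun_eq_iff)
qed

lemma lin_comb_y_coeff_prediction:
  "m < M \<Longrightarrow> lin_comb I (y_coeff 0 (Suc m)) g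
     = lin_comb I (y_coeff 0 m) g + (1 / real M) *\<^sub>R (\<Sum>i<s0. b0 $ i *\<^sub>R g (0, m, i))"
  by (simp only: y_coeff.simps lin_comb_linear lin_comb_delta[OF finite_I]) (simp add: indc_index_def)

lemma lin_comb_y_coeff_correction:
  "k < K \<Longrightarrow> m < M \<Longrightarrow> lin_comb I (y_coeff (Suc k) (Suc m)) g = lin_comb I (y_coeff (Suc k) m) g
     + (1 / real M) *\<^sub>R (\<Sum>j<M. int_weight M m 1 (Suc j) *\<^sub>R g (k, j, last_stage k))
     + (1 / real M) *\<^sub>R (\<Sum>i<s. b $ i *\<^sub>R (g (Suc k, m, i)
          - (\<Sum>j<M. interp_weight M m (c $ i) (Suc j) *\<^sub>R g (k, j, last_stage k))))"
  by (simp only: y_coeff.simps lin_comb_linear lin_comb_delta[OF finite_I])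
    (simp add: indc_index_def last_stage_less)

lemma lin_comb_stage_coeff_prediction:
  "m < M \<Longrightarrow> lin_comb I (stage_coeff (0, m, i)) g
     = lin_comb I (y_coeff 0 m) g + (1 / real M) *\<^sub>R (\<Sum>j<s0. A0 $$ (i, j) *\<^sub>R g (0, m, j))"
  by (simp only: stage_coeff.simps lin_comb_linear lin_comb_delta[OF finite_I]) (simp add: indc_index_def)

lemma lin_comb_stage_coeff_correction:
  "k < K \<Longrightarrow> m < M \<Longrightarrow> lin_comb I (stage_coeff (Suc k, m, i)) g = lin_comb I (y_coeff (Suc k) m) g
     + (1 / real M) *\<^sub>R (\<Sum>j<M. int_weight M m (c $ i) (Suc j) *\<^sub>R g (k, j, last_stage k))
     + (1 / real M) *\<^sub>R (\<Sum>j<s. a $$ (i, j) *\<^sub>R (g (Suc k, m, j)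
          - (\<Sum>j'<M. interp_weight M m (c $ j) (Suc j') *\<^sub>R g (k, j', last_stage k))))"
  by (simp only: stage_coeff.simps lin_comb_linear lin_comb_delta[OF finite_I])
    (simp add: indc_index_def last_stage_less)

lemma lin_comb_y_coeff_prediction_eq_0:
  "m \<le> M \<Longrightarrow> (\<And>m' i. m' < m \<Longrightarrow> i < s0 \<Longrightarrow> x (0, m', i) = 0) \<Longrightarrow> lin_comb I (y_coeff 0 m) x = (0::real)"
proof (induction m)
  case (Suc m)
  then show ?case using lin_comb_y_coeff_prediction[of m x] by simp
qed (simp add: lin_comb_zero)

lemma lin_comb_y_coeff_correction_eq_0:
  "k < K \<Longrightarrow> m \<le> M \<Longrightarrow> (\<And>m' i. m' < m \<Longrightarrow> i < s \<Longrightarrow> x (Suc k, m', i) = 0)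
    \<Longrightarrow> (\<And>j. j < M \<Longrightarrow> x (k, j, last_stage k) = 0) \<Longrightarrow> lin_comb I (y_coeff (Suc k) m) x = (0::real)"
proof (induction m)
  case (Suc m)
  then show ?case using lin_comb_y_coeff_correction[of k m x] by simp
qed (simp add: lin_comb_zero)

context
  fixes x :: "nat \<times> nat \<times> nat \<Rightarrow> real"
  assumes zero: "\<forall>p\<in>I. lin_comb I (stage_coeff p) x = 0"
begin

lemma prediction_stage_eq_0: "m < M \<Longrightarrow> i < s0 \<Longrightarrow> x (0, m, i) = 0"
proof (induction m arbitrary: i rule: less_induct)
  case (less m)
  have y: "lin_comb I (y_coeff 0 m) x = 0"
    using less by (intro lin_comb_y_coeff_prediction_eq_0) simp_all
  have "(\<Sum>j<s0. A0 $$ (i', j) * x (0, m, j)) = 0" if "i' < s0" for i'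
  proof -
    have "(0, m, i') \<in> I" using that less.prems unfolding indc_index_def by simp
    then show ?thesis
      using zero lin_comb_stage_coeff_prediction[OF less.prems(1), of i' x] y M_pos by auto
  qed
  then show ?case using invertible_mat_kernel_sum[OF inv0 A0_carrier, of "\<lambda>j. x (0, m, j)"] less.prems(2) by blast
qed

lemma correction_stage_eq_0:
  assumes k: "k < K" and prev: "\<And>j. j < M \<Longrightarrow> x (k, j, last_stage k) = 0"
  shows "m < M \<Longrightarrow> i < s \<Longrightarrow> x (Suc k, m, i) = 0"
proof (induction m arbitrary: i rule: less_induct)
  case (less m)
  have y: "lin_comb I (y_coeff (Suc k) m) x = 0"
    using less k prev by (intro lin_comb_y_coeff_correction_eq_0) simp_all
  have "(\<Sum>j<s. a $$ (i', j) * x (Suc k, m, j)) = 0" if "i' < s" for i'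
  proof -
    have "(Suc k, m, i') \<in> I" using that less.prems k unfolding indc_index_def by simp
    then show ?thesis
      using zero lin_comb_stage_coeff_correction[OF k less.prems(1), of i' x] y prev M_pos by auto
  qed
  then show ?case using invertible_mat_kernel_sum[OF inv a_carrier, of "\<lambda>j. x (Suc k, m, j)"] less.prems(2) by blast
qed

lemma stage_eq_0: "k \<le> K \<Longrightarrow> m < M \<Longrightarrow> i < (if k = 0 then s0 else s) \<Longrightarrow> x (k, m, i) = 0"
proof (induction k arbitrary: m i)
  case 0
  then show ?case using prediction_stage_eq_0 by simp
next
  case (Suc k)
  then show ?case using correction_stage_eq_0[of k] last_stage_less[of k] by simp
qed

end

lemma stage_coeff_injective:
  assumes "\<forall>q\<in>I. (\<Sum>r\<in>I. stage_coeff q r * x r) = 0"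
  shows "\<forall>q\<in>I. x q = 0"
proof -
  have "\<forall>p\<in>I. lin_comb I (stage_coeff p) x = 0"
    using assms unfolding lin_comb_def by simp
  then show ?thesis using stage_eq_0 unfolding indc_index_def by auto
qed

end

locale indc_step = indc_tableaux +
  fixes tn H :: real and F :: "'a::real_vector \<Rightarrow> 'a" and yn :: 'a
    and Y :: "nat \<Rightarrow> nat \<Rightarrow> nat \<Rightarrow> 'a"
  assumes H_pos: "0 < H"
begin

abbreviation "h \<equiv> H / real M"
abbreviation "yv \<equiv> indc_y M tn h F yn b0 b c Y"
abbreviation "Yq \<equiv> \<lambda>(k, m, i). Y k m i"
abbreviation "g \<equiv> \<lambda>q. F (Yq q)"

lemma h_pos: "0 < h" and h_nonzero: "h \<noteq> 0"
  using H_pos M_pos by simp_all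

definition last_stage_matches :: "nat \<Rightarrow> bool" where
  "last_stage_matches k \<longleftrightarrow> (\<forall>m<M. Y k m (last_stage k) = yv k (Suc m))"

lemma y_prediction_eq_lin_comb: "m \<le> M \<Longrightarrow> yv 0 m = yn + H *\<^sub>R lin_comb I (y_coeff 0 m) g"
proof (induction m)
  case (Suc m)
  then have "yv 0 (Suc m) = yn + H *\<^sub>R lin_comb I (y_coeff 0 m) g + h *\<^sub>R (\<Sum>i<s0. b0 $ i *\<^sub>R g (0, m, i))"
    by simp
  also have "\<dots> = yn + H *\<^sub>R lin_comb I (y_coeff 0 (Suc m)) g"
    using lin_comb_y_coeff_prediction[of m g] Suc.prems by (simp add: scaleR_add_right)
  finally show ?case .
qed (simp add: lin_comb_zero)

lemma F_last_stage:
  "last_stage_matches k \<Longrightarrow> j < M \<Longrightarrow> F (yv k (Suc j)) = g (k, j, last_stage k)"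
  unfolding last_stage_matches_def by simp

lemma y_correction_eq_lin_comb:
  assumes k: "k < K" and matches: "last_stage_matches k"
  shows "m \<le> M \<Longrightarrow> yv (Suc k) m = yn + H *\<^sub>R lin_comb I (y_coeff (Suc k) m) g"
proof (induction m)
  case (Suc m)
  then have "yv (Suc k) (Suc m) = yn + H *\<^sub>R lin_comb I (y_coeff (Suc k) m) g
      + h *\<^sub>R (\<Sum>j<M. int_weight M m 1 (Suc j) *\<^sub>R g (k, j, last_stage k))
      + h *\<^sub>R (\<Sum>i<s. b $ i *\<^sub>R (g (Suc k, m, i)
           - (\<Sum>j<M. interp_weight M m (c $ i) (Suc j) *\<^sub>R g (k, j, last_stage k))))"
    using F_last_stage[OF matches]
    by (simp add: quadS_eq_quadSc quadSc_eq_int_weight[OF h_pos] quadP_eq_interp_weight[OF h_nonzero])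
  also have "\<dots> = yn + H *\<^sub>R lin_comb I (y_coeff (Suc k) (Suc m)) g"
    using lin_comb_y_coeff_correction[OF k, of m g] Suc.prems by (simp add: scaleR_add_right)
  finally show ?case .
qed (simp add: lin_comb_zero)

fun stage_rhs :: "nat \<Rightarrow> nat \<Rightarrow> nat \<Rightarrow> 'a" where
  "stage_rhs 0 m i = yv 0 m + h *\<^sub>R (\<Sum>j<dim_col A0. A0 $$ (i, j) *\<^sub>R F (Y 0 m j))"
| "stage_rhs (Suc k) m i = yv (Suc k) m
     + h *\<^sub>R quadSc M tn h m (c $ i) (\<lambda>j. F (yv k j))
     + h *\<^sub>R (\<Sum>j<dim_col a. a $$ (i, j) *\<^sub>R
          (F (Y (Suc k) m j) - quadP M tn h m (c $ j) (\<lambda>j'. F (yv k j'))))"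

lemma indc_stage_eqs_iff_stage_rhs:
  "indc_stage_eqs M K A0 b0 a b c tn H F yn Y \<longleftrightarrow> (\<forall>(k, m, i)\<in>I. Y k m i = stage_rhs k m i)"
proof -
  have dims: "dim_row A0 = s0" "dim_col A0 = s0" "dim_row a = s" "dim_col a = s"
    using A0_carrier a_carrier by auto
  show ?thesis
    unfolding indc_stage_eqs_def Let_def ball_atLeast1_atMost_iff diff_Suc_1 ball_indc_index
      stage_rhs.simps dims ..
qed

lemma stage_rhs_last_stage: "stage_rhs k m (last_stage k) = yv k (Suc m)"
proof (cases k)
  case 0
  then show ?thesis
    using A0_carrier stiffly_accurate_last_row_entry[OF stiff0] by (simp add: last_stage_def)
next
  case (Suc k')
  then show ?thesis
    using a_carrier stiffly_accurate_last_row_entry[OF stiff] c_last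
    by (simp add: last_stage_def quadS_eq_quadSc)
qed

lemma stage_rhs_eq_lin_comb:
  assumes "(k, m, i) \<in> I" and "0 < k \<Longrightarrow> last_stage_matches (k - 1)"
  shows "stage_rhs k m i = yn + H *\<^sub>R lin_comb I (stage_coeff (k, m, i)) g"
proof (cases k)
  case 0
  then have m: "m < M" using assms(1) unfolding indc_index_def by simp
  then show ?thesis
    using 0 y_prediction_eq_lin_comb[of m] lin_comb_stage_coeff_prediction[OF m, of i g] A0_carrier
    by (simp add: scaleR_add_right)
next
  case (Suc k')
  then have k': "k' < K" and m: "m < M" and matches: "last_stage_matches k'"
    using assms unfolding indc_index_def by auto
  then show ?thesis
    using Suc y_correction_eq_lin_comb[OF k' matches, of m] lin_comb_stage_coeff_correction[OF k' m, of i g]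
      a_carrier F_last_stage[OF matches]
    by (simp add: scaleR_add_right quadSc_eq_int_weight[OF h_pos] quadP_eq_interp_weight[OF h_nonzero])
qed

lemma last_stage_matches_of_stage_rhs:
  assumes "\<forall>(k, m, i)\<in>I. Y k m i = stage_rhs k m i" and "k \<le> K"
  shows "last_stage_matches k"
  unfolding last_stage_matches_def
  using assms last_stage_in[of k] stage_rhs_last_stage by fastforce

lemma last_stage_matches_of_lin_comb_step:
  assumes rk: "\<forall>q\<in>I. Yq q = yn + H *\<^sub>R lin_comb I (stage_coeff q) g" and k: "k \<le> K"
    and y: "\<And>m. m \<le> M \<Longrightarrow> yv k m = yn + H *\<^sub>R lin_comb I (y_coeff k m) g"
  shows "last_stage_matches k"
  unfolding last_stage_matches_def
proof (intro allI impI)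
  fix m assume m: "m < M"
  have "Y k m (last_stage k) = yn + H *\<^sub>R lin_comb I (stage_coeff (k, m, last_stage k)) g"
    using bspec[OF rk last_stage_in[OF k m]] by simp
  also have "\<dots> = yv k (Suc m)"
    using y[of "Suc m"] m by (simp add: stage_coeff_last_stage)
  finally show "Y k m (last_stage k) = yv k (Suc m)" .
qed

lemma last_stage_matches_of_lin_comb:
  assumes rk: "\<forall>q\<in>I. Yq q = yn + H *\<^sub>R lin_comb I (stage_coeff q) g"
  shows "k \<le> K \<Longrightarrow> last_stage_matches k"
proof (induction k)
  case 0
  show ?case by (rule last_stage_matches_of_lin_comb_step[OF rk 0 y_prediction_eq_lin_comb])
next
  case (Suc k)
  then have k: "k < K" and matches: "last_stage_matches k" by simp_all
  show ?case
    by (rule last_stage_matches_of_lin_comb_step[OF rk Suc.prems y_correction_eq_lin_comb[OF k matches]])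
qed

theorem indc_stage_eqs_iff_lin_comb:
  "indc_stage_eqs M K A0 b0 a b c tn H F yn Y \<longleftrightarrow> (\<forall>q\<in>I. Yq q = yn + H *\<^sub>R lin_comb I (stage_coeff q) g)"
proof -
  have agree: "(\<forall>(k, m, i)\<in>I. Y k m i = stage_rhs k m i) \<longleftrightarrow> (\<forall>q\<in>I. Yq q = yn + H *\<^sub>R lin_comb I (stage_coeff q) g)"
    if all: "\<forall>k\<le>K. last_stage_matches k"
  proof (rule ball_cong[OF refl])
    fix q assume q: "q \<in> I"
    obtain k m i where q_eq: "q = (k, m, i)" by (cases q)
    then have "k \<le> K" using q unfolding indc_index_def by simp
    then show "(case q of (k, m, i) \<Rightarrow> Y k m i = stage_rhs k m i)
        \<longleftrightarrow> Yq q = yn + H *\<^sub>R lin_comb I (stage_coeff q) g"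
      using stage_rhs_eq_lin_comb[of k m i] q all unfolding q_eq by simp
  qed
  show ?thesis
    unfolding indc_stage_eqs_iff_stage_rhs
  proof (intro iffI)
    assume "\<forall>(k, m, i)\<in>I. Y k m i = stage_rhs k m i"
    with agree last_stage_matches_of_stage_rhs[OF this]
    show "\<forall>q\<in>I. Yq q = yn + H *\<^sub>R lin_comb I (stage_coeff q) g" by simp
  next
    assume "\<forall>q\<in>I. Yq q = yn + H *\<^sub>R lin_comb I (stage_coeff q) g"
    with agree last_stage_matches_of_lin_comb[OF this]
    show "\<forall>(k, m, i)\<in>I. Y k m i = stage_rhs k m i" by simp
  qed
qed

lemma indc_output_eq_last_stage:
  assumes "indc_stage_eqs M K A0 b0 a b c tn H F yn Y"
  shows "indc_output M K b0 b c tn H F yn Y = Y K (M - 1) (last_stage K)"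
  using last_stage_matches_of_stage_rhs[of K] assms M_pos
  unfolding indc_stage_eqs_iff_stage_rhs indc_output_def last_stage_matches_def
  by (simp add: Suc_diff_1)

end

context indc_tableaux
begin

lemma indc_eq_rk_of_enumeration:
  fixes F :: "'a::real_vector \<Rightarrow> 'a" and Y :: "nat \<Rightarrow> nat \<Rightarrow> nat \<Rightarrow> 'a"
  assumes \<sigma>: "bij_betw \<sigma> I {..<card I}" and \<sigma>_last: "\<sigma> (K, M - 1, last_stage K) = card I - 1"
    and A: "A \<in> carrier_mat (card I) (card I)"
    and entries: "\<And>q r. q \<in> I \<Longrightarrow> r \<in> I \<Longrightarrow> A $$ (\<sigma> q, \<sigma> r) = stage_coeff q r"
    and H: "0 < H"
  shows "let Z = (\<lambda>l. case inv_into I \<sigma> l of (k, m, i) \<Rightarrow> Y k m i) in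
           (indc_stage_eqs M K A0 b0 a b c tn H F yn Y \<longleftrightarrow> rk_stage_eqs A H F yn Z) \<and>
           (indc_stage_eqs M K A0 b0 a b c tn H F yn Y \<longrightarrow>
              indc_output M K b0 b c tn H F yn Y = rk_output (row A (card I - 1)) H F yn Z)"
  unfolding Let_def
proof (intro conjI impI)
  interpret indc_step M K A0 a b0 b c tn H F yn Y using H by unfold_locales
  let ?Z = "\<lambda>l. Yq (inv_into I \<sigma> l)"
  show eqs: "indc_stage_eqs M K A0 b0 a b c tn H F yn Y \<longleftrightarrow> rk_stage_eqs A H F yn ?Z"
    using rk_stage_eqs_reindex[OF \<sigma> A entries, of H F yn Yq] indc_stage_eqs_iff_lin_comb by simp
  assume stages: "indc_stage_eqs M K A0 b0 a b c tn H F yn Y"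
  have "rk_output (row A (card I - 1)) H F yn ?Z = ?Z (card I - 1)"
    using eqs stages by (intro rk_output_last_row[OF A card_I_pos]) simp
  also have "\<dots> = Y K (M - 1) (last_stage K)"
    unfolding \<sigma>_last[symmetric] using final_stage_in \<sigma> by (simp add: bij_betw_imp_inj_on inv_into_f_f)
  also have "\<dots> = indc_output M K b0 b c tn H F yn Y"
    using indc_output_eq_last_stage[OF stages] by simp
  finally show "indc_output M K b0 b c tn H F yn Y = rk_output (row A (card I - 1)) H F yn ?Z" ..
qed

end

theorem proposition7p2:
  fixes M K :: nat and A0 a :: "real mat" and b0 b c :: "real vec"
  assumes "M \<ge> 1"
    and "stiffly_accurate A0 b0" and "invertible_mat A0"
    and "stiffly_accurate a b" and "invertible_mat a"
    and "dim_vec c = dim_vec b" and "\<forall>i < dim_vec c. c $ i = (\<Sum>j < dim_vec b. a $$ (i, j))"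
    and "(\<Sum>i < dim_vec b. b $ i) = 1"
  shows "\<exists>(A :: real mat) (bb :: real vec) (\<sigma> :: nat \<times> nat \<times> nat \<Rightarrow> nat).
           stiffly_accurate A bb \<and> invertible_mat A \<and>
           bij_betw \<sigma> (indc_index M K (dim_vec b0) (dim_vec b)) {..< dim_row A} \<and>
           (\<forall>(F :: 'a::real_vector \<Rightarrow> 'a) yn tn H (Y :: nat \<Rightarrow> nat \<Rightarrow> nat \<Rightarrow> 'a).
              H > 0 \<longrightarrow>
              (let Z = (\<lambda>l. case inv_into (indc_index M K (dim_vec b0) (dim_vec b)) \<sigma> l of
                               (k, m, i) \<Rightarrow> Y k m i) in
                 (indc_stage_eqs M K A0 b0 a b c tn H F yn Y \<longleftrightarrow> rk_stage_eqs A H F yn Z) \<and>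
                 (indc_stage_eqs M K A0 b0 a b c tn H F yn Y \<longrightarrow>
                    indc_output M K b0 b c tn H F yn Y = rk_output bb H F yn Z)))"
proof -
  interpret indc_tableaux M K A0 a b0 b c using assms by unfold_locales
  obtain \<sigma> A where \<sigma>: "bij_betw \<sigma> I {..<card I}" and \<sigma>_last: "\<sigma> (K, M - 1, last_stage K) = card I - 1"
    and A: "A \<in> carrier_mat (card I) (card I)" and "invertible_mat A"
    and entries: "\<And>q r. q \<in> I \<Longrightarrow> r \<in> I \<Longrightarrow> A $$ (\<sigma> q, \<sigma> r) = stage_coeff q r"
    using tableau_of_injective_coeffs[OF finite_I final_stage_in stage_coeff_injective] by blast
  show ?thesis
    using stiffly_accurate_last_row[OF A card_I_pos] \<open>invertible_mat A\<close> \<sigma> A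
    by (intro exI[of _ A] exI[of _ "row A (card I - 1)"] exI[of _ \<sigma>] conjI allI impI
        indc_eq_rk_of_enumeration[OF \<sigma> \<sigma>_last A entries]) simp_all
qed

end
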